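(* Let $k$ be an algebraically closed field, $\ell$ a non-trivial extension field of $k$, and $V,W$ be $k$-vector spaces. Suppose there exist $k$-linear maps $f,g\colon V\to W$ such that for every pair of scalars $\lambda,\mu\in\ell$, not both zero, the map $\operatorname{Hom}_k(\lambda,f)+\operatorname{Hom}_k(\mu,g)\colon\operatorname{Hom}_k(\ell,V)\to\operatorname{Hom}_k(\ell,W)$ is an isomorphism. Then $V=0=W$.
   Context: Here $\lambda$ and $\mu$ denote the $k$-linear maps $\ell\to\ell$ given by multiplication by $\lambda$ and $\mu$, so $\operatorname{Hom}_k(\lambda,f)$ sends $h\colon\ell\to V$ to $f\circ h\circ(\lambda\cdot-)$. *)

theory Defs
  imports "HOL-Computational_Algebra.Polynomial"
begin

(* k-vector space structure on an extension field l, given via a field embedding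
   phi : k -> l : scalar c acts on x by multiplication with phi c. *)
definition ext_scale :: "('k::field \<Rightarrow> 'l::field) \<Rightarrow> 'k \<Rightarrow> 'l \<Rightarrow> 'l" where
  "ext_scale \<phi> c x = \<phi> c * x"

definition Hom_k :: "('k::field \<Rightarrow> 'l::field) \<Rightarrow> ('k \<Rightarrow> 'v::ab_group_add \<Rightarrow> 'v) \<Rightarrow> ('l \<Rightarrow> 'v) set" where
  "Hom_k \<phi> sV = {h. Vector_Spaces.linear (ext_scale \<phi>) sV h}"

(* Hom_k(lambda, f) + Hom_k(mu, g) : h |-> f o h o (lambda * -) + g o h o (mu * -) *)
definition pencil_map :: "'l::field \<Rightarrow> ('v \<Rightarrow> 'w::ab_group_add) \<Rightarrow> 'l \<Rightarrow> ('v \<Rightarrow> 'w) \<Rightarrow> ('l \<Rightarrow> 'v) \<Rightarrow> ('l \<Rightarrow> 'w)" where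
  "pencil_map a f b g h = (\<lambda>x. f (h (a * x)) + g (h (b * x)))"

end

theory Submission
  imports Defs "HOL-Computational_Algebra.Fraction_Field"
begin

text \<open>
  Evaluating the hypothesis at \<open>(1, 0)\<close> and at \<open>(-c, 1)\<close> shows that \<open>f\<close> is bijective and that
  \<open>B = f\<inverse> \<circ> g\<close> has empty spectrum: \<open>B - c\<close> is bijective for every \<open>c \<in> k\<close>. As \<open>k\<close> is
  algebraically closed, \<open>p(B)\<close> is then bijective for every nonzero \<open>p \<in> k[X]\<close>, so \<open>V\<close> becomes a
  vector space over \<open>k(X)\<close> with \<open>X\<close> acting as \<open>B\<close>. An element \<open>t \<in> \<ell> - k\<close> makes \<open>\<ell>\<close> a
  \<open>k(X)\<close>-vector space in the same way, with \<open>X\<close> acting as multiplication by \<open>t\<close>. For \<open>v \<noteq> 0\<close> in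
  \<open>V\<close>, a \<open>k(X)\<close>-linear map \<open>h : \<ell> \<rightarrow> V\<close> with \<open>h 1 = v\<close> satisfies \<open>f \<circ> h \<circ> (t \<cdot> -) = g \<circ> h\<close>,
  so it is a nonzero element of the kernel of the pencil at \<open>(t, -1)\<close>, a contradiction.
  Hence \<open>V = 0\<close>, and \<open>W = f(V) = 0\<close>.
\<close>

lemma vector_space_mult: "vector_space ((*) :: 'a::field \<Rightarrow> 'a \<Rightarrow> 'a)"
  by unfold_locales (simp_all add: algebra_simps)

lemma (in vector_space) exists_linear_functional_eq_one:
  assumes "x \<noteq> 0"
  shows "\<exists>\<psi>. Vector_Spaces.linear scale (*) \<psi> \<and> \<psi> x = 1"
proof -
  interpret vector_space_pair scale "(*) :: 'a \<Rightarrow> 'a \<Rightarrow> 'a"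
    by (intro vector_space_pair.intro vector_space_axioms vector_space_mult)
  have "independent {x}"
    using assms by simp
  then show ?thesis
    using linear_independent_extend[of "{x}" "\<lambda>_. 1"] by auto
qed

locale endomorphism = vector_space scale
  for scale :: "'k::field \<Rightarrow> 'v::ab_group_add \<Rightarrow> 'v" (infixr "*s" 75) +
  fixes B :: "'v \<Rightarrow> 'v"
  assumes linear_B: "Vector_Spaces.linear scale scale B"
begin

sublocale B: Vector_Spaces.linear scale scale B
  by (fact linear_B)

definition poly_op :: "'k poly \<Rightarrow> 'v \<Rightarrow> 'v" where
  "poly_op p v = (\<Sum>i<Suc (degree p). coeff p i *s (B ^^ i) v)"

lemma poly_op_bound: "degree p < n \<Longrightarrow> poly_op p v = (\<Sum>i<n. coeff p i *s (B ^^ i) v)"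
  unfolding poly_op_def by (rule sum.mono_neutral_left) (auto simp: coeff_eq_0)

lemma poly_op_0 [simp]: "poly_op 0 v = 0"
  by (simp add: poly_op_def)

lemma poly_op_pCons: "poly_op (pCons a p) v = a *s v + B (poly_op p v)"
proof -
  have "poly_op (pCons a p) v = (\<Sum>i<Suc (Suc (degree p)). coeff (pCons a p) i *s (B ^^ i) v)"
    by (rule poly_op_bound) (simp add: degree_pCons_le le_imp_less_Suc)
  also have "\<dots> = a *s v + (\<Sum>i<Suc (degree p). coeff p i *s (B ^^ Suc i) v)"
    by (subst sum.lessThan_Suc_shift) simp
  also have "(\<Sum>i<Suc (degree p). coeff p i *s (B ^^ Suc i) v) = B (poly_op p v)"
    unfolding poly_op_def B.sum by (simp add: B.scale)
  finally show ?thesis .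
qed

lemma poly_op_const: "poly_op [:c:] v = c *s v"
  by (simp add: poly_op_pCons)

lemma poly_op_1: "poly_op 1 v = v"
  by (simp add: one_pCons poly_op_const)

lemma poly_op_linear_factor: "poly_op [:- c, 1:] v = B v - c *s v"
  by (simp add: poly_op_pCons poly_op_const)

lemma poly_op_add: "poly_op (p + q) v = poly_op p v + poly_op q v"
proof -
  define n where "n = Suc (max (degree p) (degree q))"
  have "poly_op (p + q) v = (\<Sum>i<n. coeff (p + q) i *s (B ^^ i) v)"
    by (rule poly_op_bound) (metis degree_add_le_max le_imp_less_Suc n_def)
  also have "\<dots> = (\<Sum>i<n. coeff p i *s (B ^^ i) v) + (\<Sum>i<n. coeff q i *s (B ^^ i) v)"
    by (simp add: sum.distrib scale_left_distrib)
  also have "\<dots> = poly_op p v + poly_op q v"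
    by (simp add: poly_op_bound[of p n] poly_op_bound[of q n] n_def del: sum.lessThan_Suc)
  finally show ?thesis .
qed

lemma poly_op_smult: "poly_op (smult c p) v = c *s poly_op p v"
proof -
  have "poly_op (smult c p) v = (\<Sum>i<Suc (degree p). coeff (smult c p) i *s (B ^^ i) v)"
    by (rule poly_op_bound) (simp add: le_imp_less_Suc)
  also have "\<dots> = c *s poly_op p v"
    by (simp add: poly_op_def scale_sum_right scale_scale del: sum.lessThan_Suc)
  finally show ?thesis .
qed

lemma poly_op_mult: "poly_op (p * q) v = poly_op p (poly_op q v)"
proof (induction p)
  case (pCons a p)
  have "poly_op (pCons a p * q) v = poly_op (smult a q) v + poly_op (pCons 0 (p * q)) v"
    by (simp add: poly_op_add)
  also have "\<dots> = poly_op (pCons a p) (poly_op q v)"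
    by (simp add: poly_op_smult poly_op_pCons pCons.IH)
  finally show ?case .
qed simp

lemma poly_op_commute: "poly_op p (poly_op q v) = poly_op q (poly_op p v)"
  by (metis poly_op_mult mult.commute)

lemma poly_op_add_right: "poly_op p (u + v) = poly_op p u + poly_op p v"
  by (induction p) (simp_all add: poly_op_pCons B.add algebra_simps)

end

locale empty_spectrum = endomorphism scale B
  for scale :: "'k::alg_closed_field \<Rightarrow> 'v::ab_group_add \<Rightarrow> 'v" (infixr "*s" 75) and B +
  assumes bij_shift: "bij (\<lambda>u. B u - c *s u)"
begin

lemma bij_poly_op: "p \<noteq> 0 \<Longrightarrow> bij (poly_op p)"
proof (induction "degree p" arbitrary: p rule: less_induct)
  case (less p)
  show ?case
  proof (cases "degree p = 0")
    case True
    then obtain c where p: "p = [:c:]" and "c \<noteq> 0"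
      using less.prems by (metis degree_eq_zeroE pCons_0_0)
    then have "bij (\<lambda>v. c *s v)"
      by (intro o_bij[where g="\<lambda>v. inverse c *s v"]) (auto simp: fun_eq_iff)
    moreover have "poly_op p = (\<lambda>v. c *s v)"
      by (simp add: fun_eq_iff p poly_op_const)
    ultimately show ?thesis
      by simp
  next
    case False
    then obtain c where "poly p c = 0"
      using alg_closed_imp_poly_has_root by blast
    then obtain q where p: "p = [:- c, 1:] * q"
      by (metis dvdE poly_eq_0_iff_dvd)
    with less.prems have "q \<noteq> 0"
      by auto
    moreover from this have "degree p = Suc (degree q)"
      unfolding p by (subst degree_mult_eq) auto
    ultimately have "bij (poly_op q)"
      using less.hyps by simp
    moreover have "poly_op p = (\<lambda>u. B u - c *s u) \<circ> poly_op q"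
      unfolding fun_eq_iff comp_apply p poly_op_mult poly_op_linear_factor by simp
    ultimately show ?thesis
      using bij_shift bij_comp by metis
  qed
qed

text \<open>\<open>fract_op v (a/b)\<close> is the unique \<open>u\<close> with \<open>b(B) u = a(B) v\<close>; it does not depend on
  the representation of the fraction.\<close>

definition fract_op :: "'v \<Rightarrow> 'k poly fract \<Rightarrow> 'v" where
  "fract_op v q = (SOME u. \<exists>a b. b \<noteq> 0 \<and> q = Fract a b \<and> poly_op b u = poly_op a v)"

lemma fract_op_eqI:
  assumes b: "b \<noteq> 0" and u: "poly_op b u = poly_op a v"
  shows "fract_op v (Fract a b) = u"
proof -
  have "\<exists>u a' b'. b' \<noteq> 0 \<and> Fract a b = Fract a' b' \<and> poly_op b' u = poly_op a' v"
    using b u by blast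
  from someI_ex[OF this] obtain a' b' where ab: "b' \<noteq> 0" "Fract a b = Fract a' b'"
    and u': "poly_op b' (fract_op v (Fract a b)) = poly_op a' v"
    unfolding fract_op_def by blast
  have eq: "a * b' = a' * b"
    using ab b eq_fract(1) by blast
  have "poly_op (b * b') (fract_op v (Fract a b)) = poly_op (a' * b) v"
    using u' by (simp add: poly_op_mult poly_op_commute[of b])
  also have "\<dots> = poly_op b' (poly_op a v)"
    by (metis eq mult.commute poly_op_mult)
  also have "\<dots> = poly_op (b * b') u"
    by (simp add: u[symmetric] poly_op_mult poly_op_commute[of b])
  finally show ?thesis
    using bij_poly_op[of "b * b'"] ab b by (simp add: bij_def inj_eq)
qed

lemma poly_op_fract_op:
  assumes "b \<noteq> 0"
  shows "poly_op b (fract_op v (Fract a b)) = poly_op a v"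
proof -
  obtain u where "poly_op b u = poly_op a v"
    using bij_poly_op[OF assms] by (metis bij_pointE)
  with fract_op_eqI[OF assms this] show ?thesis
    by simp
qed

lemma fract_op_1: "fract_op v 1 = v"
  unfolding One_fract_def by (rule fract_op_eqI) (simp_all add: poly_op_1)

lemma fract_op_add: "fract_op v (q + r) = fract_op v q + fract_op v r"
proof -
  obtain a b where q: "q = Fract a b" "b \<noteq> 0" by (cases q)
  obtain c d where r: "r = Fract c d" "d \<noteq> 0" by (cases r)
  have "poly_op (b * d) (fract_op v q + fract_op v r)
      = poly_op d (poly_op b (fract_op v q)) + poly_op b (poly_op d (fract_op v r))"
    by (simp add: poly_op_add_right poly_op_mult mult.commute[of b d] poly_op_commute[of d])
  also have "\<dots> = poly_op (d * a + b * c) v"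
    using q r by (simp add: poly_op_fract_op poly_op_add poly_op_mult)
  also have "d * a + b * c = a * d + c * b"
    by (simp add: mult.commute)
  finally show ?thesis
    using q r by (simp add: fract_op_eqI)
qed

lemma fract_op_poly_mult: "fract_op v (Fract p 1 * q) = poly_op p (fract_op v q)"
proof -
  obtain a b where q: "q = Fract a b" "b \<noteq> 0" by (cases q)
  then have "poly_op b (poly_op p (fract_op v q)) = poly_op (p * a) v"
    by (simp add: poly_op_commute[of b] poly_op_fract_op poly_op_mult)
  then show ?thesis
    using q by (simp add: fract_op_eqI)
qed

end

locale field_embedding =
  fixes \<phi> :: "'k::field \<Rightarrow> 'l::field"
  assumes hom_add: "\<phi> (a + b) = \<phi> a + \<phi> b"
    and hom_mult: "\<phi> (a * b) = \<phi> a * \<phi> b"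
    and hom_one: "\<phi> 1 = 1"
begin

sublocale ext: vector_space "ext_scale \<phi>"
  by unfold_locales (simp_all add: ext_scale_def hom_add hom_mult hom_one algebra_simps)

lemma hom_zero: "\<phi> 0 = 0"
  using hom_add[of 0 0] by (metis add_0 add_cancel_right_right)

lemma hom_uminus: "\<phi> (- a) = - \<phi> a"
  by (metis add.right_inverse add_eq_0_iff hom_add add_cancel_right_right)

lemma Hom_k_iff: "h \<in> Hom_k \<phi> sV \<longleftrightarrow> Vector_Spaces.linear (ext_scale \<phi>) sV h"
  by (simp add: Hom_k_def)

lemma Hom_k_scale:
  assumes "h \<in> Hom_k \<phi> sV"
  shows "h (\<phi> c * x) = sV c (h x)"
proof -
  interpret Vector_Spaces.linear "ext_scale \<phi>" sV h
    using assms by (simp add: Hom_k_iff)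
  show ?thesis
    using scale[of c x] by (simp add: ext_scale_def)
qed

lemma Hom_k_0: "h \<in> Hom_k \<phi> sV \<Longrightarrow> h 0 = 0"
  by (simp add: Hom_k_iff module_hom.zero linear_iff_module_hom)

lemma rank_one_in_Hom_k:
  assumes "vector_space sV" and "Vector_Spaces.linear (ext_scale \<phi>) (*) \<psi>"
  shows "(\<lambda>y. sV (\<psi> y) u) \<in> Hom_k \<phi> sV"
proof -
  interpret vector_space_pair "ext_scale \<phi>" sV
    by (intro vector_space_pair.intro ext.vector_space_axioms assms(1))
  show ?thesis
    using module_hom_compose_scale[of \<psi> u] assms(2) by (simp add: Hom_k_iff module_hom_iff_linear)
qed

text \<open>Precomposing with the rank-one maps \<open>y \<mapsto> \<psi>(y) u\<close>, where \<open>\<psi> : \<ell> \<rightarrow> k\<close> is \<open>k\<close>-linear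
  with \<open>\<psi>(1) = 1\<close>, embeds \<open>V\<close> into \<open>Hom\<^sub>k(\<ell>, V)\<close> compatibly with postcomposition.\<close>

lemma bij_of_bij_betw_postcomp:
  assumes V: "vector_space sV" and W: "vector_space sW"
    and D: "\<And>c u. D (sV c u) = sW c (D u)"
    and P: "\<And>h. h \<in> Hom_k \<phi> sV \<Longrightarrow> P h = D \<circ> h"
    and bij: "bij_betw P (Hom_k \<phi> sV) (Hom_k \<phi> sW)"
  shows "bij D"
proof -
  interpret V: vector_space sV by fact
  interpret W: vector_space sW by fact
  obtain \<psi> where \<psi>: "Vector_Spaces.linear (ext_scale \<phi>) (*) \<psi>" "\<psi> 1 = 1"
    using ext.exists_linear_functional_eq_one[of 1] by auto
  let ?hV = "\<lambda>u y. sV (\<psi> y) u" and ?hW = "\<lambda>w y. sW (\<psi> y) w"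
  have hV: "?hV u \<in> Hom_k \<phi> sV" for u
    by (rule rank_one_in_Hom_k[OF V \<psi>(1)])
  have hW: "?hW w \<in> Hom_k \<phi> sW" for w
    by (rule rank_one_in_Hom_k[OF W \<psi>(1)])
  have P_hV: "P (?hV u) = ?hW (D u)" for u
    by (simp add: P[OF hV] fun_eq_iff D)
  have "inj D"
  proof (rule injI)
    fix u u'
    assume "D u = D u'"
    then have "?hV u = ?hV u'"
      using bij hV P_hV unfolding bij_betw_def inj_on_def by metis
    then show "u = u'"
      using \<psi>(2) by (metis V.scale_one)
  qed
  moreover have "w \<in> range D" for w
  proof -
    obtain h where h: "h \<in> Hom_k \<phi> sV" "P h = ?hW w"
      using bij hW unfolding bij_betw_def by (metis imageE)
    then have "D (h 1) = w"
      using P[OF h(1)] \<psi>(2) by (metis W.scale_one comp_apply)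
    then show ?thesis
      by blast
  qed
  ultimately show ?thesis
    by (auto simp: bij_def)
qed

end

locale transcendental_element = field_embedding \<phi>
  for \<phi> :: "'k::alg_closed_field \<Rightarrow> 'l::field" +
  fixes t :: 'l
  assumes transcendental: "t \<notin> range \<phi>"
begin

sublocale T: empty_spectrum "ext_scale \<phi>" "(*) t"
proof (intro empty_spectrum.intro empty_spectrum_axioms.intro endomorphism.intro
    endomorphism_axioms.intro ext.vector_space_axioms)
  show "Vector_Spaces.linear (ext_scale \<phi>) (ext_scale \<phi>) ((*) t)"
    by (simp add: Vector_Spaces.linear_iff ext.vector_space_axioms module_hom_iff ext_scale_def algebra_simps)
next
  fix c
  have "t - \<phi> c \<noteq> 0"
    using transcendental by auto
  then have "bij (\<lambda>u. (t - \<phi> c) * u)"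
    by (intro o_bij[where g = "\<lambda>u. inverse (t - \<phi> c) * u"]) (auto simp: fun_eq_iff)
  then show "bij (\<lambda>u. t * u - ext_scale \<phi> c u)"
    by (simp add: ext_scale_def algebra_simps)
qed

lemma T_poly_op_eq_mult: "T.poly_op p y = T.poly_op p 1 * y"
proof (induction p)
  case (pCons a p)
  have "T.poly_op (pCons a p) y = ext_scale \<phi> a y + t * (T.poly_op p 1 * y)"
    by (simp add: T.poly_op_pCons pCons.IH)
  also have "\<dots> = (ext_scale \<phi> a 1 + t * T.poly_op p 1) * y"
    by (simp add: ext_scale_def algebra_simps)
  finally show ?case
    by (simp add: T.poly_op_pCons)
qed simp

lemma T_poly_op_mult_1: "T.poly_op (p * q) 1 = T.poly_op p 1 * T.poly_op q 1"
  by (metis T.poly_op_mult T_poly_op_eq_mult mult.commute)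

text \<open>The substitution \<open>X \<mapsto> t\<close>, a field homomorphism \<open>k(X) \<rightarrow> \<ell>\<close>.\<close>

definition eval_fract :: "'k poly fract \<Rightarrow> 'l" where
  "eval_fract q = T.fract_op 1 q"

lemma eval_fract_add: "eval_fract (q + r) = eval_fract q + eval_fract r"
  by (simp add: eval_fract_def T.fract_op_add)

lemma eval_fract_1: "eval_fract 1 = 1"
  by (simp add: eval_fract_def T.fract_op_1)

lemma eval_fract_poly: "eval_fract (Fract p 1) = T.poly_op p 1"
  using T.fract_op_poly_mult[of 1 p 1] by (simp add: eval_fract_def T.fract_op_1)

lemma eval_fract_mult: "eval_fract (q * r) = eval_fract q * eval_fract r"
proof -
  obtain a b where q: "q = Fract a b" "b \<noteq> 0" by (cases q)
  obtain c d where r: "r = Fract c d" "d \<noteq> 0" by (cases r)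
  have "T.poly_op (b * d) (eval_fract q * eval_fract r)
      = T.poly_op b (eval_fract q) * T.poly_op d (eval_fract r)"
    by (subst (1 2 3) T_poly_op_eq_mult) (simp add: T_poly_op_mult_1)
  also have "\<dots> = T.poly_op (a * c) 1"
    using q r by (simp add: eval_fract_def T.poly_op_fract_op T_poly_op_mult_1)
  finally show ?thesis
    using q r by (simp add: eval_fract_def T.fract_op_eqI)
qed

lemma vector_space_eval_fract: "vector_space (\<lambda>q x. eval_fract q * x)"
  by unfold_locales (simp_all add: eval_fract_add eval_fract_mult eval_fract_1 algebra_simps)

lemma exists_intertwiner:
  assumes "empty_spectrum sV B"
  shows "\<exists>h \<in> Hom_k \<phi> sV. h 1 = v \<and> (\<forall>x. h (t * x) = B (h x))"
proof -
  interpret V: empty_spectrum sV B by fact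
  interpret K: vector_space "\<lambda>q x. eval_fract q * x"
    by (fact vector_space_eval_fract)
  obtain \<psi> where \<psi>: "Vector_Spaces.linear (\<lambda>q x. eval_fract q * x) (*) \<psi>" and \<psi>1: "\<psi> 1 = 1"
    using K.exists_linear_functional_eq_one[of 1] by auto
  interpret \<psi>: Vector_Spaces.linear "\<lambda>q x. eval_fract q * x" "(*)" \<psi>
    by (fact \<psi>)
  \<comment> \<open>\<open>h\<close> is \<open>k(X)\<close>-linear, with \<open>X\<close> acting as \<open>t\<close> on \<open>\<ell>\<close> and as \<open>B\<close> on \<open>V\<close>.\<close>
  define h where "h y = V.fract_op v (\<psi> y)" for y
  have h_poly: "h (T.poly_op p 1 * x) = V.poly_op p (h x)" for p x
    using \<psi>.scale[of "Fract p 1" x] by (simp add: h_def eval_fract_poly V.fract_op_poly_mult)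
  have "h (ext_scale \<phi> c x) = sV c (h x)" for c x
    using h_poly[of "[:c:]" x] T.poly_op_const[of c 1] by (simp add: V.poly_op_const ext_scale_def)
  moreover have "h (x + y) = h x + h y" for x y
    by (simp add: h_def \<psi>.add V.fract_op_add)
  ultimately have "h \<in> Hom_k \<phi> sV"
    by (simp add: Hom_k_iff Vector_Spaces.linear_iff ext.vector_space_axioms V.vector_space_axioms)
  moreover have "h (t * x) = B (h x)" for x
    using h_poly[of "[:0, 1:]" x] T.poly_op_pCons[of 0 "[:1:]" 1] T.poly_op_const[of 1 1]
    by (simp add: V.poly_op_pCons ext_scale_def hom_zero hom_one)
  moreover have "h 1 = v"
    by (simp add: h_def \<psi>1 V.fract_op_1)
  ultimately show ?thesis
    by blast
qed

end

locale pencil_iso = field_embedding \<phi> + V: vector_space sV + W: vector_space sW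
  for \<phi> :: "'k::alg_closed_field \<Rightarrow> 'l::field"
    and sV :: "'k \<Rightarrow> 'v::ab_group_add \<Rightarrow> 'v"
    and sW :: "'k \<Rightarrow> 'w::ab_group_add \<Rightarrow> 'w" +
  fixes f g :: "'v \<Rightarrow> 'w"
  assumes linear_f: "Vector_Spaces.linear sV sW f"
    and linear_g: "Vector_Spaces.linear sV sW g"
    and iso: "(a, b) \<noteq> (0, 0) \<Longrightarrow> bij_betw (pencil_map a f b g) (Hom_k \<phi> sV) (Hom_k \<phi> sW)"
begin

sublocale f: Vector_Spaces.linear sV sW f
  by (fact linear_f)

sublocale g: Vector_Spaces.linear sV sW g
  by (fact linear_g)

lemma bij_f: "bij f"
proof (rule bij_of_bij_betw_postcomp[OF V.vector_space_axioms W.vector_space_axioms _ _ iso[of 1 0]])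
  show "pencil_map 1 f 0 g h = f \<circ> h" if "h \<in> Hom_k \<phi> sV" for h
    using Hom_k_0[OF that] by (simp add: pencil_map_def fun_eq_iff)
qed (simp_all add: f.scale)

lemma bij_g_minus_scale_f: "bij (\<lambda>u. g u - sW c (f u))"
proof (rule bij_of_bij_betw_postcomp[OF V.vector_space_axioms W.vector_space_axioms _ _ iso[of "- \<phi> c" 1]])
  show "g (sV a u) - sW c (f (sV a u)) = sW a (g u - sW c (f u))" for a u
    by (simp add: f.scale g.scale W.scale_right_diff_distrib W.scale_scale mult.commute)
  show "pencil_map (- \<phi> c) f 1 g h = (\<lambda>u. g u - sW c (f u)) \<circ> h" if "h \<in> Hom_k \<phi> sV" for h
    using Hom_k_scale[OF that, of "- c"]
    by (simp add: pencil_map_def fun_eq_iff hom_uminus f.neg f.scale)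
qed simp

definition f_inv_g :: "'v \<Rightarrow> 'v" where
  "f_inv_g = inv f \<circ> g"

lemma f_f_inv_g: "f (f_inv_g u) = g u"
  using bij_f by (simp add: f_inv_g_def bij_is_surj surj_f_inv_f)

lemma empty_spectrum_f_inv_g: "empty_spectrum sV f_inv_g"
proof (intro empty_spectrum.intro empty_spectrum_axioms.intro endomorphism.intro
    endomorphism_axioms.intro V.vector_space_axioms)
  have inj_f: "f x = f y \<Longrightarrow> x = y" for x y
    using bij_f by (simp add: bij_is_inj inj_eq)
  show "Vector_Spaces.linear sV sV f_inv_g"
    by (auto simp: Vector_Spaces.linear_iff V.vector_space_axioms
        intro!: inj_f simp: f.add g.add f.scale g.scale f_f_inv_g)
  fix c
  have "(\<lambda>u. f_inv_g u - sV c u) = inv f \<circ> (\<lambda>u. g u - sW c (f u))"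
    by (rule ext, rule inj_f) (simp add: f.diff f.scale f_f_inv_g bij_f bij_is_surj surj_f_inv_f)
  then show "bij (\<lambda>u. f_inv_g u - sV c u)"
    using bij_g_minus_scale_f bij_f by (simp add: bij_comp bij_imp_bij_inv)
qed

lemma V_trivial:
  fixes v :: 'v
  assumes "\<not> surj \<phi>"
  shows "v = 0"
proof -
  obtain t where "t \<notin> range \<phi>"
    using assms by blast
  then interpret transcendental_element \<phi> t
    by unfold_locales
  obtain h where h: "h \<in> Hom_k \<phi> sV" "h 1 = v" and h_t: "\<And>x. h (t * x) = f_inv_g (h x)"
    using exists_intertwiner[OF empty_spectrum_f_inv_g] by blast
  interpret h: Vector_Spaces.linear "ext_scale \<phi>" sV h
    using h(1) by (simp add: Hom_k_iff)
  have "pencil_map t f (- 1) g h = pencil_map t f (- 1) g (\<lambda>_. 0)"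
    by (simp add: pencil_map_def fun_eq_iff h_t f_f_inv_g h.neg g.neg)
  moreover have "(\<lambda>_. 0) \<in> Hom_k \<phi> sV"
    by (simp add: Hom_k_iff Vector_Spaces.linear_iff ext.vector_space_axioms V.vector_space_axioms)
  ultimately have "h = (\<lambda>_. 0)"
    using iso[of t "- 1"] h(1) by (simp add: bij_betw_def inj_on_def)
  then show ?thesis
    using h(2) by simp
qed

lemma W_trivial:
  fixes w :: 'w
  assumes "\<not> surj \<phi>"
  shows "w = 0"
proof -
  obtain u where "w = f u"
    using bij_f by (metis bij_pointE)
  then show ?thesis
    using V_trivial[OF assms, of u] by simp
qed

end

theorem lemma4p1:
  fixes \<phi> :: "'k::alg_closed_field \<Rightarrow> 'l::field"
    and sV :: "'k \<Rightarrow> 'v::ab_group_add \<Rightarrow> 'v"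
    and sW :: "'k \<Rightarrow> 'w::ab_group_add \<Rightarrow> 'w"
    and f g :: "'v \<Rightarrow> 'w"
  assumes hom_add: "\<And>a b. \<phi> (a + b) = \<phi> a + \<phi> b"
    and hom_mult: "\<And>a b. \<phi> (a * b) = \<phi> a * \<phi> b"
    and hom_one: "\<phi> 1 = 1"
    and nontrivial: "\<not> surj \<phi>"
    and V: "vector_space sV"
    and W: "vector_space sW"
    and f: "Vector_Spaces.linear sV sW f"
    and g: "Vector_Spaces.linear sV sW g"
    and iso: "\<And>a b :: 'l. (a, b) \<noteq> (0, 0) \<Longrightarrow>
               bij_betw (pencil_map a f b g) (Hom_k \<phi> sV) (Hom_k \<phi> sW)"
  shows "(\<forall>v::'v. v = 0) \<and> (\<forall>w::'w. w = 0)"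
proof -
  interpret pencil_iso \<phi> sV sW f g
    by (intro pencil_iso.intro field_embedding.intro pencil_iso_axioms.intro assms)
  show ?thesis
    using V_trivial[OF nontrivial] W_trivial[OF nontrivial] by blast
qed

end
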